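(* Let $\Pi_n$ be a PARITY$_n$ program such that no rule $y\leftarrow B$ of $\Pi_n$ has $y\in var(B)$. (i) If $x\leftarrow B\in\Pi_n$ with $x$ a variable, $B$ consistent, and $B\cup\{x\}$ does not fully cover $\{x_1,\dots,x_n\}$, then $not\ not\ x\in B$. (ii) If $H\leftarrow B\in\Pi_n$ with $B$ consistent and either $H=\bot$, or $H$ is a variable $x$ with $not\ x\in B$ (i.e. $B\cup\{H\}$ is inconsistent), then $B$ fully covers $\{x_1,\dots,x_n\}$.
   Context: A rule element is one of $\top$, $\bot$, $x$, $not\ x$, $not\ not\ x$, where $x$ is a variable. A (canonical) rule is $H\leftarrow B$ with $H$ a variable or $\bot$ and $B$ a finite set of rule elements; a canonical program is a finite set of rules. For a body $B$, $var(B)=\{e\in B: e\text{ is a variable}\}$. For a set of variables $I$: $I\models\top$; $I\not\models\bot$; $I\models x$ iff $I\models not\ not\ x$ iff $x\in I$; $I\models not\ x$ iff $x\notin I$; $I\models B$ iff $I$ satisfies every element of $B$; $I$ is closed under $H\leftarrow B$ if $I\models B$ implies $I\models H$. The reduct $\Pi^I$ replaces $not\ not\ x$ by $\top$ if $x\in I$ else $\bot$, and $not\ x$ by $\top$ if $x\notin I$ else $\bot$; $I$ is an answer set of $\Pi$ if $I$ is the least set closed under all rules of $\Pi^I$; $Ans(\Pi)$ is the set of answer sets; $var(\Pi)$ the set of variables occurring in $\Pi$. Strings $w\in\{0,1\}^n$ are identified with $\{x_i:w_i=1\}$; PARITY$_n$ is the set of strings in $\{0,1\}^n$ with an odd number of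 1's; a PARITY$_n$ program is a canonical program $\Pi$ with $var(\Pi)=\{x_1,\dots,x_n\}$ and $Ans(\Pi)=$ PARITY$_n$. For a set $B$ of rule elements, $S(B)=\{I\subseteq\{x_1,\dots,x_n\}: I\models B\}$; $B$ is consistent if $S(B)\neq\emptyset$. $B$ covers a variable $x$ if $x\in B$, $not\ x\in B$ or $not\ not\ x\in B$; $B$ fully covers $\{x_1,\dots,x_n\}$ if it covers every $x_i$. *)

theory Defs
  imports Main
begin

(* Variables x_i are represented by natural numbers i; the program's variables are {1..n}. *)
datatype elem = Top | Bot | Var nat | Not nat | NotNot nat

(* Head: Some x is the variable x, None is bottom *)
type_synonym rule = "nat option \<times> elem set"
type_synonym program = "rule set"

fun sat_elem :: "nat set \<Rightarrow> elem \<Rightarrow> bool" where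
  "sat_elem I Top = True"
| "sat_elem I Bot = False"
| "sat_elem I (Var x) = (x \<in> I)"
| "sat_elem I (Not x) = (x \<notin> I)"
| "sat_elem I (NotNot x) = (x \<in> I)"

definition sat_body :: "nat set \<Rightarrow> elem set \<Rightarrow> bool" where
  "sat_body I B = (\<forall>e\<in>B. sat_elem I e)"

fun sat_head :: "nat set \<Rightarrow> nat option \<Rightarrow> bool" where
  "sat_head I None = False"
| "sat_head I (Some x) = (x \<in> I)"

definition closed_under :: "nat set \<Rightarrow> rule \<Rightarrow> bool" where
  "closed_under I r = (sat_body I (snd r) \<longrightarrow> sat_head I (fst r))"

fun reduct_elem :: "nat set \<Rightarrow> elem \<Rightarrow> elem" where
  "reduct_elem I (NotNot x) = (if x \<in> I then Top else Bot)"
| "reduct_elem I (Not x) = (if x \<notin> I then Top else Bot)"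
| "reduct_elem I e = e"

definition reduct :: "program \<Rightarrow> nat set \<Rightarrow> program" where
  "reduct P I = (\<lambda>(h, B). (h, reduct_elem I ` B)) ` P"

definition answer_set :: "program \<Rightarrow> nat set \<Rightarrow> bool" where
  "answer_set P I = ((\<forall>r\<in>reduct P I. closed_under I r) \<and>
     (\<forall>J. (\<forall>r\<in>reduct P I. closed_under J r) \<longrightarrow> I \<subseteq> J))"

definition Ans :: "program \<Rightarrow> nat set set" where
  "Ans P = {I. answer_set P I}"

fun elem_vars :: "elem \<Rightarrow> nat set" where
  "elem_vars (Var x) = {x}"
| "elem_vars (Not x) = {x}"
| "elem_vars (NotNot x) = {x}"
| "elem_vars _ = {}"

fun head_vars :: "nat option \<Rightarrow> nat set" where
  "head_vars None = {}"
| "head_vars (Some x) = {x}"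

definition prog_vars :: "program \<Rightarrow> nat set" where
  "prog_vars P = (\<Union>(h, B)\<in>P. head_vars h \<union> (\<Union>e\<in>B. elem_vars e))"

(* var(B): the variables occurring positively (as plain elements) in B *)
definition body_var :: "elem set \<Rightarrow> nat set" where
  "body_var B = {x. Var x \<in> B}"

definition canonical_program :: "program \<Rightarrow> bool" where
  "canonical_program P = (finite P \<and> (\<forall>(h, B)\<in>P. finite B))"

definition PARITY :: "nat \<Rightarrow> nat set set" where
  "PARITY n = {I. I \<subseteq> {1..n} \<and> odd (card I)}"

definition parity_program :: "nat \<Rightarrow> program \<Rightarrow> bool" where
  "parity_program n P = (canonical_program P \<and> prog_vars P = {1..n} \<and> Ans P = PARITY n)"

definition S :: "nat \<Rightarrow> elem set \<Rightarrow> nat set set" where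
  "S n B = {I. I \<subseteq> {1..n} \<and> sat_body I B}"

definition consistent :: "nat \<Rightarrow> elem set \<Rightarrow> bool" where
  "consistent n B = (S n B \<noteq> {})"

definition covers :: "elem set \<Rightarrow> nat \<Rightarrow> bool" where
  "covers B x = (Var x \<in> B \<or> Not x \<in> B \<or> NotNot x \<in> B)"

definition fully_covers :: "elem set \<Rightarrow> nat \<Rightarrow> bool" where
  "fully_covers B n = (\<forall>i\<in>{1..n}. covers B i)"

end

theory Submission
  imports Defs
begin

text \<open>
  If a body \<open>B\<close> leaves some \<open>y \<in> {1..n}\<close> uncovered, then whether \<open>y\<close> belongs to an
  interpretation is irrelevant for \<open>B\<close>; toggling \<open>y\<close> in a model of \<open>B\<close> fixes its parity, so
  some odd set, i.e. some answer set, satisfies \<open>B\<close> and hence the head of the rule. For (ii)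
  the head cannot hold there. For (i), if \<open>not not x\<close> and \<open>not x\<close> are absent then \<open>x\<close> is
  uncovered as well (no rule contains its own head positively), so we may first delete \<open>x\<close>
  and then toggle \<open>y\<close>, obtaining an answer set satisfying \<open>B\<close> but not the head \<open>x\<close>.
\<close>

lemma sat_head_if_answer_set:
  assumes "(h, B) \<in> P" "J \<in> Ans P" "sat_body J B"
  shows "sat_head J h"
proof -
  have "(h, reduct_elem J ` B) \<in> reduct P J"
    using assms(1) unfolding reduct_def by force
  moreover have "sat_body J (reduct_elem J ` B)"
  proof -
    have "sat_elem J (reduct_elem J e)" if "sat_elem J e" for e
      using that by (cases e) auto
    then show ?thesis using assms(3) unfolding sat_body_def by blast
  qed
  ultimately show ?thesis
    using assms(2) unfolding Ans_def answer_set_def closed_under_def by auto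
qed

lemma sat_body_cong:
  assumes "\<And>x. covers B x \<Longrightarrow> x \<in> I \<longleftrightarrow> x \<in> J"
  shows "sat_body I B = sat_body J B"
  unfolding sat_body_def
proof (intro ball_cong refl)
  fix e assume "e \<in> B"
  then show "sat_elem I e = sat_elem J e"
    using assms unfolding covers_def by (cases e) auto
qed

lemma sat_body_Diff_uncovered:
  assumes "\<not> covers B y"
  shows "sat_body (I - {y}) B = sat_body I B"
  using assms by (intro sat_body_cong) auto

lemma sat_body_insert_uncovered:
  assumes "\<not> covers B y"
  shows "sat_body (insert y I) B = sat_body I B"
  using assms by (intro sat_body_cong) auto

lemma PARITY_sat_body_if_uncovered:
  assumes "I \<subseteq> {1..n}" "sat_body I B" "y \<in> {1..n}" "\<not> covers B y"
  obtains J where "J \<in> PARITY n" "sat_body J B" "J - {y} = I - {y}"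
proof -
  let ?I0 = "I - {y}"
  have fin: "finite ?I0" using assms(1) finite_subset by blast
  have sat0: "sat_body ?I0 B" using assms(2,4) by (simp add: sat_body_Diff_uncovered)
  show ?thesis
  proof (cases "odd (card ?I0)")
    case True
    then show ?thesis using that[of ?I0] sat0 assms(1) unfolding PARITY_def by auto
  next
    case False
    have "card (insert y ?I0) = Suc (card ?I0)" using card_insert_disjoint[OF fin] by blast
    then have "insert y ?I0 \<in> PARITY n"
      using False assms(1,3) unfolding PARITY_def by auto
    moreover have "sat_body (insert y ?I0) B"
      using sat_body_insert_uncovered[OF assms(4)] sat0 by blast
    ultimately show ?thesis using that by blast
  qed
qed

lemma sat_head_if_uncovered:
  assumes "PARITY n \<subseteq> Ans P" "(H, B) \<in> P"
    and "I \<subseteq> {1..n}" "sat_body I B" "y \<in> {1..n}" "\<not> covers B y"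
  obtains J where "sat_head J H" "sat_body J B" "J - {y} = I - {y}"
proof -
  obtain J where J: "J \<in> PARITY n" "sat_body J B" "J - {y} = I - {y}"
    using PARITY_sat_body_if_uncovered[OF assms(3-6)] .
  then show ?thesis
    using that sat_head_if_answer_set[OF assms(2) _ J(2)] assms(1) by blast
qed

lemma fully_covers_if_head_unsatisfiable:
  assumes "PARITY n \<subseteq> Ans P" "(H, B) \<in> P" "consistent n B"
    and "H = None \<or> (\<exists>x. H = Some x \<and> Not x \<in> B)"
  shows "fully_covers B n"
proof (rule ccontr)
  assume "\<not> fully_covers B n"
  then obtain y where y: "y \<in> {1..n}" "\<not> covers B y" unfolding fully_covers_def by blast
  obtain I where I: "I \<subseteq> {1..n}" "sat_body I B"
    using assms(3) unfolding consistent_def S_def by blast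
  obtain J where J: "sat_head J H" "sat_body J B"
    using sat_head_if_uncovered[OF assms(1,2) I y] .
  then show False
    using assms(4) unfolding sat_body_def by (cases H) force+
qed

lemma NotNot_head_in_body:
  assumes "PARITY n \<subseteq> Ans P" "(Some x, B) \<in> P" "Var x \<notin> B" "consistent n B"
    and "\<not> fully_covers (insert (Var x) B) n"
  shows "NotNot x \<in> B"
proof (rule ccontr)
  assume NotNot: "NotNot x \<notin> B"
  obtain y where y: "y \<in> {1..n}" "\<not> covers (insert (Var x) B) y"
    using assms(5) unfolding fully_covers_def by blast
  then have "y \<noteq> x" and y_uncovered: "\<not> covers B y" unfolding covers_def by auto
  have "Not x \<notin> B"
    using fully_covers_if_head_unsatisfiable[OF assms(1,2,4)] y y_uncovered
    unfolding fully_covers_def by blast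
  then have x_uncovered: "\<not> covers B x" using assms(3) NotNot unfolding covers_def by auto
  obtain I where "I \<subseteq> {1..n}" "sat_body I B"
    using assms(4) unfolding consistent_def S_def by blast
  then have I: "I - {x} \<subseteq> {1..n}" "sat_body (I - {x}) B"
    by (auto simp: sat_body_Diff_uncovered[OF x_uncovered])
  obtain J where "sat_head J (Some x)" "J - {y} = I - {x} - {y}"
    using sat_head_if_uncovered[OF assms(1,2) I y(1) y_uncovered] .
  then show False using \<open>y \<noteq> x\<close> by auto
qed

theorem mainTheorem15:
  fixes n :: nat and P :: program
  assumes par: "parity_program n P"
    and noself: "\<forall>y B. (Some y, B) \<in> P \<longrightarrow> y \<notin> body_var B"
  shows "(\<forall>x B. (Some x, B) \<in> P \<longrightarrow> consistent n B \<longrightarrow>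
              \<not> fully_covers (insert (Var x) B) n \<longrightarrow> NotNot x \<in> B)
       \<and> (\<forall>H B. (H, B) \<in> P \<longrightarrow> consistent n B \<longrightarrow>
              (H = None \<or> (\<exists>x. H = Some x \<and> Not x \<in> B)) \<longrightarrow> fully_covers B n)"
proof -
  have parity: "PARITY n \<subseteq> Ans P" using par unfolding parity_program_def by auto
  have "Var x \<notin> B" if "(Some x, B) \<in> P" for x B
    using noself that unfolding body_var_def by auto
  then show ?thesis
    using NotNot_head_in_body[OF parity] fully_covers_if_head_unsatisfiable[OF parity] by blast
qed

end
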